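(* Let $\mathcal{X}$ be a finite set and let $\mu,\nu$ be probability distributions on $\mathcal{X}$ with $\mathrm{D}_\infty(\mu\|\nu)<\infty$. Let $\widetilde D\sim\mu^n$ and $\widehat D\sim\nu^m$ be datasets of $n$ and $m$ independent samples from $\mu$ and $\nu$ respectively, and let $\widehat{\mathcal{X}}=\{x\in\mathcal{X}: x\text{ appears in }\widehat D\}$ be the support of $\widehat D$. Let $Q$ be a finite set of statistical queries $q:\mathcal{X}\to[0,1]$ and let $\alpha,\beta>0$. If \[n\ge \frac{8}{\alpha^2}\log\left(\frac{4|Q|}{\beta}\right)\quad\text{and}\quad m\ge\left(\frac{32}{\alpha^2}e^{\mathrm{D}_2(\mu\|\nu)}+\frac{8}{3\alpha}e^{\mathrm{D}_\infty(\mu\|\nu)}\right)\log\left(\frac{4|Q|+4}{\beta}\right),\] then $\Pr\left[f_{\widetilde D,Q}(\widehat{\mathcal{X}})\le\alpha\right]\ge 1-\beta$.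
   Context: For a dataset $D=(x_1,\dots,x_k)\in\mathcal{X}^k$ and a query $q:\mathcal{X}\to[0,1]$, $q(D)=\frac1k\sum_{i}q(x_i)$. For a nonempty $S\subseteq\mathcal{X}$, the best mixture error is $f_{D,Q}(S)=\min_{\mu'\in\Delta(S)}\max_{q\in Q}\left|q(D)-\sum_{x\in S}\mu'_x q(x)\right|$, where $\Delta(S)$ is the set of probability distributions on $S$. Rényi divergences: $\mathrm{D}_2(\mu\|\nu)=\log\sum_{x\in\mathcal{X}}\mu(x)^2/\nu(x)$ and $\mathrm{D}_\infty(\mu\|\nu)=\log\max_{x:\mu(x)>0}\mu(x)/\nu(x)$ (in general $\mathrm{D}_\alpha(\mu\|\nu)=\frac{1}{\alpha-1}\log\sum_x\mu(x)^\alpha\nu(x)^{1-\alpha}$). *)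

theory Defs
  imports "HOL-Probability.Probability"
begin

definition query_val :: "('a \<Rightarrow> real) \<Rightarrow> 'a list \<Rightarrow> real" where
  "query_val q D = (\<Sum>x\<leftarrow>D. q x) / real (length D)"

text \<open>The max over an empty Q is taken to be 0 (all values are nonnegative).\<close>
definition mix_err :: "'a list \<Rightarrow> ('a \<Rightarrow> real) set \<Rightarrow> 'a set \<Rightarrow> real" where
  "mix_err D Q S = Inf {Max (insert 0 ((\<lambda>q. \<bar>query_val q D - (\<Sum>x\<in>S. pmf w x * q x)\<bar>) ` Q))
                         | w. set_pmf w \<subseteq> S}"

definition renyi2 :: "'a::finite pmf \<Rightarrow> 'a pmf \<Rightarrow> real" where
  "renyi2 \<mu> \<nu> = ln (\<Sum>x\<in>UNIV. pmf \<mu> x ^ 2 / pmf \<nu> x)"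

definition renyi_inf :: "'a::finite pmf \<Rightarrow> 'a pmf \<Rightarrow> ereal" where
  "renyi_inf \<mu> \<nu> = (if \<forall>x. pmf \<mu> x > 0 \<longrightarrow> pmf \<nu> x > 0
      then ereal (ln (Max {pmf \<mu> x / pmf \<nu> x | x. pmf \<mu> x > 0})) else \<infinity>)"

end

theory Submission
  imports Defs
begin

(* Hoeffding's inequality puts the answers of the sample Dt drawn from mu within alpha/2 of the
   true answers q(mu), except with probability beta/2. Weighting each sample x of Dh by the
   importance weight mu(x)/nu(x) gives unbiased estimates of the q(mu); the weighted values are
   bounded by exp D_inf(mu||nu) and their second moments by exp D_2(mu||nu), so Bernstein's
   inequality puts these estimates, and the total weight (the constant query 1), within alpha/4,
   again except with probability beta/2. On both events the normalised weights form a
   distribution on the support of Dh whose answers are within alpha/2 + alpha/4 + alpha/4 of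
   those of Dt. *)

section \<open>Exponential inequalities\<close>

lemma exp_le_quadratic_of_nonpos:
  fixes y :: real
  assumes "y \<le> 0"
  shows "exp y \<le> 1 + y + y\<^sup>2 / 2"
proof -
  obtain t where "exp y = (\<Sum>k<3. y ^ k / fact k) + exp t / fact 3 * y ^ 3"
    using Maclaurin_exp_le[of y 3] by blast
  moreover have "exp t / fact 3 * y ^ 3 \<le> 0"
    using assms by (intro mult_nonneg_nonpos) (auto simp: power_odd_eq)
  ultimately show ?thesis
    by (simp add: eval_nat_numeral fact_numeral power2_eq_square)
qed

lemma exp_le_bernstein_of_nonneg:
  fixes y :: real
  assumes "0 \<le> y" and "y < 3"
  shows "exp y \<le> 1 + y + y\<^sup>2 / (2 * (1 - y / 3))"
proof -
  have geometric: "(\<lambda>k. y\<^sup>2 / 2 * (y / 3) ^ k) sums (y\<^sup>2 / 2 * (1 / (1 - y / 3)))"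
    using assms by (intro sums_mult geometric_sums) auto
  (* termwise comparison with a geometric series, as (k + 2)! \<ge> 2 * 3 ^ k *)
  have term_le: "inverse (fact (k + 2)) * y ^ (k + 2) \<le> y\<^sup>2 / 2 * (y / 3) ^ k" for k
  proof -
    have "(2::nat) * 3 ^ k \<le> fact (k + 2)"
      by (induction k) (simp_all add: algebra_simps)
    then have "real ((2::nat) * 3 ^ k) \<le> real (fact (k + 2))"
      by (simp only: of_nat_le_iff)
    then have fact_ge: "2 * 3 ^ k \<le> (fact (k + 2) :: real)"
      unfolding of_nat_fact by simp
    have "inverse (fact (k + 2)) * y ^ (k + 2) = y ^ k * y\<^sup>2 / fact (k + 2)"
      by (simp add: power_add divide_inverse mult_ac power2_eq_square)
    also have "\<dots> \<le> y ^ k * y\<^sup>2 / (2 * 3 ^ k)"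
      using assms by (intro divide_left_mono fact_ge) auto
    also have "\<dots> = y\<^sup>2 / 2 * (y / 3) ^ k"
      by (simp add: power_divide)
    finally show ?thesis .
  qed
  have "(\<Sum>k. inverse (fact (k + 2)) * y ^ (k + 2)) \<le> (\<Sum>k. y\<^sup>2 / 2 * (y / 3) ^ k)"
    using term_le summable_exp[THEN summable_ignore_initial_segment] sums_summable[OF geometric]
    by (rule suminf_le)
  also have "\<dots> = y\<^sup>2 / 2 * (1 / (1 - y / 3))"
    using geometric by (rule sums_unique[symmetric])
  finally show ?thesis
    unfolding exp_first_two_terms by (simp add: field_simps)
qed

lemma exp_le_bernstein:
  fixes y c :: real
  assumes "y \<le> c" and "0 \<le> c" and "c < 3"
  shows "exp y \<le> 1 + y + y\<^sup>2 / (2 * (1 - c / 3))"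
proof (cases "y \<le> 0")
  case True
  have "y\<^sup>2 / 2 \<le> y\<^sup>2 / (2 * (1 - c / 3))"
    using assms by (intro divide_left_mono) auto
  with exp_le_quadratic_of_nonpos[OF True] show ?thesis by linarith
next
  case False
  have "y\<^sup>2 / (2 * (1 - y / 3)) \<le> y\<^sup>2 / (2 * (1 - c / 3))"
    using assms False by (intro divide_left_mono) auto
  with exp_le_bernstein_of_nonneg[of y] False assms show ?thesis by linarith
qed

section \<open>Tail bounds for means of i.i.d. samples\<close>

lemma finite_set_replicate_pmf:
  "finite (set_pmf p) \<Longrightarrow> finite (set_pmf (replicate_pmf n p))"
  by (simp add: set_replicate_pmf lists_eq_set finite_lists_length_eq)

lemma expectation_replicate_pmf_prod_list:
  fixes g :: "'a \<Rightarrow> real"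
  assumes fin: "finite (set_pmf p)"
  shows "measure_pmf.expectation (replicate_pmf n p) (\<lambda>D. prod_list (map g D))
           = measure_pmf.expectation p g ^ n"
proof (induction n)
  case (Suc n)
  have cons: "replicate_pmf n p \<bind> (\<lambda>xs. return_pmf (a # xs)) = map_pmf ((#) a) (replicate_pmf n p)"
    for a by (simp add: map_pmf_def)
  have "measure_pmf.expectation (replicate_pmf (Suc n) p) (\<lambda>D. prod_list (map g D))
      = (\<Sum>a\<in>set_pmf p. pmf p a *\<^sub>R
           measure_pmf.expectation (map_pmf ((#) a) (replicate_pmf n p)) (\<lambda>D. prod_list (map g D)))"
    unfolding replicate_pmf.simps cons
    by (rule pmf_expectation_bind) (auto intro: fin finite_set_replicate_pmf)
  also have "\<dots> = (\<Sum>a\<in>set_pmf p. g a * pmf p a) * measure_pmf.expectation p g ^ n"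
    by (simp add: Suc.IH sum_distrib_left mult_ac)
  also have "(\<Sum>a\<in>set_pmf p. g a * pmf p a) = measure_pmf.expectation p g"
    by (rule integral_measure_pmf_real[symmetric]) (auto intro: fin)
  finally show ?case by simp
qed simp

lemma length_mult_le_sum_list_of_le_query_val:
  assumes "c \<le> query_val f D"
  shows "real (length D) * c \<le> sum_list (map f D)"
  using assms by (cases "D = []") (auto simp: query_val_def field_simps)

lemma prob_query_val_ge_chernoff:
  fixes f :: "'a \<Rightarrow> real"
  assumes fin: "finite (set_pmf p)" and "0 \<le> l"
  shows "measure_pmf.prob (replicate_pmf n p) {D. c \<le> query_val f D}
          \<le> exp (- l * real n * c) * measure_pmf.expectation p (\<lambda>x. exp (l * f x)) ^ n"
proof -
  let ?A = "{D. c \<le> query_val f D}" and ?M = "measure_pmf (replicate_pmf n p)"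
  have integrable: "integrable ?M h" for h :: "'a list \<Rightarrow> real"
    by (rule integrable_measure_pmf_finite[OF finite_set_replicate_pmf[OF fin]])
  have "measure_pmf.prob (replicate_pmf n p) ?A = integral\<^sup>L ?M (indicator ?A)"
    by simp
  also have "\<dots> \<le> integral\<^sup>L ?M (\<lambda>D. exp (- l * real n * c) * prod_list (map (\<lambda>x. exp (l * f x)) D))"
  proof (rule integral_mono_AE[OF integrable integrable], rule AE_pmfI)
    fix D assume "D \<in> set_pmf (replicate_pmf n p)"
    then have len: "length D = n" by (simp add: set_replicate_pmf)
    have prod_exp: "prod_list (map (\<lambda>x. exp (l * f x)) D) = exp (l * sum_list (map f D))"
      by (induction D) (simp_all add: exp_add distrib_left)
    have "1 \<le> exp (- l * real n * c) * exp (l * sum_list (map f D))" if "D \<in> ?A"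
    proof -
      have "l * (real n * c) \<le> l * sum_list (map f D)"
        using that len \<open>0 \<le> l\<close> length_mult_le_sum_list_of_le_query_val
        by (intro mult_left_mono) auto
      then show ?thesis by (simp add: mult_exp_exp)
    qed
    then show "indicator ?A D \<le> exp (- l * real n * c) * prod_list (map (\<lambda>x. exp (l * f x)) D)"
      by (auto simp: prod_exp indicator_def)
  qed
  also have "\<dots> = exp (- l * real n * c) * measure_pmf.expectation p (\<lambda>x. exp (l * f x)) ^ n"
    by (simp add: expectation_replicate_pmf_prod_list[OF fin])
  finally show ?thesis .
qed

lemma prob_query_val_ge_of_mgf_le:
  fixes f :: "'a \<Rightarrow> real"
  assumes fin: "finite (set_pmf p)" and "0 \<le> l"
    and mgf: "measure_pmf.expectation p (\<lambda>x. exp (l * f x))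
                \<le> exp (l * measure_pmf.expectation p f + v)"
  shows "measure_pmf.prob (replicate_pmf n p) {D. measure_pmf.expectation p f + t \<le> query_val f D}
          \<le> exp (real n * (v - l * t))"
proof -
  let ?E = "measure_pmf.expectation p f"
  have "measure_pmf.prob (replicate_pmf n p) {D. ?E + t \<le> query_val f D}
      \<le> exp (- l * real n * (?E + t)) * measure_pmf.expectation p (\<lambda>x. exp (l * f x)) ^ n"
    by (rule prob_query_val_ge_chernoff[OF fin \<open>0 \<le> l\<close>])
  also have "\<dots> \<le> exp (- l * real n * (?E + t)) * exp (l * ?E + v) ^ n"
    by (intro mult_left_mono power_mono mgf integral_nonneg_AE) auto
  also have "\<dots> = exp (real n * (v - l * t))"
    by (simp add: exp_of_nat_mult[symmetric] mult_exp_exp algebra_simps)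
  finally show ?thesis .
qed

lemma expectation_exp_le_hoeffding:
  fixes f :: "'a \<Rightarrow> real"
  assumes fin: "finite (set_pmf p)" and range: "\<forall>x. a \<le> f x \<and> f x \<le> b" and "0 < l"
  shows "measure_pmf.expectation p (\<lambda>x. exp (l * f x))
          \<le> exp (l * measure_pmf.expectation p f + l\<^sup>2 * (b - a)\<^sup>2 / 8)"
proof -
  interpret interval_bounded_random_variable "measure_pmf p" f a b
    by unfold_locales (use range in auto)
  let ?E = "measure_pmf.expectation p f"
  have "ennreal (measure_pmf.expectation p (\<lambda>x. exp (l * (f x - ?E))))
      = (\<integral>\<^sup>+x. exp (l * (f x - ?E)) \<partial>measure_pmf p)"
    by (rule nn_integral_eq_integral[symmetric]) (auto intro: integrable_measure_pmf_finite[OF fin])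
  also have "\<dots> \<le> ennreal (exp (l\<^sup>2 * (b - a)\<^sup>2 / 8))"
    by (rule Hoeffdings_lemma_nn_integral[OF \<open>0 < l\<close>])
  finally have centered: "measure_pmf.expectation p (\<lambda>x. exp (l * (f x - ?E))) \<le> exp (l\<^sup>2 * (b - a)\<^sup>2 / 8)"
    by simp
  have "measure_pmf.expectation p (\<lambda>x. exp (l * f x))
      = exp (l * ?E) * measure_pmf.expectation p (\<lambda>x. exp (l * (f x - ?E)))"
    by (simp add: mult_exp_exp algebra_simps flip: integral_mult_right_zero)
  also have "\<dots> \<le> exp (l * ?E) * exp (l\<^sup>2 * (b - a)\<^sup>2 / 8)"
    using centered by simp
  finally show ?thesis
    by (simp add: mult_exp_exp)
qed

lemma expectation_exp_le_bernstein:
  fixes f :: "'a \<Rightarrow> real"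
  assumes fin: "finite (set_pmf p)" and bound: "\<forall>x. f x \<le> B"
    and "0 \<le> l" and "0 \<le> l * B" and "l * B < 3"
    and second_moment: "measure_pmf.expectation p (\<lambda>x. (f x)\<^sup>2) \<le> s"
  shows "measure_pmf.expectation p (\<lambda>x. exp (l * f x))
          \<le> exp (l * measure_pmf.expectation p f + l\<^sup>2 * s / (2 * (1 - l * B / 3)))"
proof -
  define K where "K = l\<^sup>2 / (2 * (1 - l * B / 3))"
  have "0 \<le> K"
    unfolding K_def using \<open>l * B < 3\<close> by (intro divide_nonneg_pos) (auto simp: mult.commute)
  have pointwise: "exp (l * f x) \<le> 1 + l * f x + K * (f x)\<^sup>2" for x
  proof -
    have "l * f x \<le> l * B"
      using bound \<open>0 \<le> l\<close> by (intro mult_left_mono) auto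
    then show ?thesis
      using exp_le_bernstein[of "l * f x" "l * B"] \<open>0 \<le> l * B\<close> \<open>l * B < 3\<close>
      by (simp add: K_def power_mult_distrib)
  qed
  have integrable: "integrable (measure_pmf p) h" for h :: "'a \<Rightarrow> real"
    by (rule integrable_measure_pmf_finite[OF fin])
  have "measure_pmf.expectation p (\<lambda>x. exp (l * f x))
      \<le> measure_pmf.expectation p (\<lambda>x. 1 + l * f x + K * (f x)\<^sup>2)"
    by (intro integral_mono integrable pointwise)
  also have "\<dots> = 1 + l * measure_pmf.expectation p f + K * measure_pmf.expectation p (\<lambda>x. (f x)\<^sup>2)"
    by (simp add: integrable)
  also have "\<dots> \<le> 1 + (l * measure_pmf.expectation p f + K * s)"
    using second_moment \<open>0 \<le> K\<close> by (simp add: mult_left_mono)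
  also have "\<dots> \<le> exp (l * measure_pmf.expectation p f + K * s)"
    by (rule exp_ge_add_one_self)
  finally show ?thesis
    by (simp add: K_def)
qed

lemma prob_query_val_ge_hoeffding:
  fixes f :: "'a \<Rightarrow> real"
  assumes fin: "finite (set_pmf p)" and range: "\<forall>x. a \<le> f x \<and> f x \<le> b"
    and "a < b" and "0 < t"
  shows "measure_pmf.prob (replicate_pmf n p) {D. measure_pmf.expectation p f + t \<le> query_val f D}
          \<le> exp (- 2 * real n * t\<^sup>2 / (b - a)\<^sup>2)"
proof -
  define w where "w = (b - a)\<^sup>2"
  define l where "l = 4 * t / w"
  have "0 < w"
    using \<open>a < b\<close> by (simp add: w_def)
  then have "0 < l"
    using \<open>0 < t\<close> by (simp add: l_def)
  have "measure_pmf.prob (replicate_pmf n p) {D. measure_pmf.expectation p f + t \<le> query_val f D}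
      \<le> exp (real n * (l\<^sup>2 * w / 8 - l * t))"
    using \<open>0 < l\<close> expectation_exp_le_hoeffding[OF fin range \<open>0 < l\<close>]
    by (intro prob_query_val_ge_of_mgf_le[OF fin]) (auto simp: w_def)
  also have "real n * (l\<^sup>2 * w / 8 - l * t) = - 2 * real n * t\<^sup>2 / w"
    using \<open>0 < w\<close> by (simp add: l_def field_simps power2_eq_square)
  finally show ?thesis
    by (simp add: w_def)
qed

lemma prob_query_val_ge_bernstein:
  fixes f :: "'a \<Rightarrow> real"
  assumes fin: "finite (set_pmf p)" and bound: "\<forall>x. f x \<le> B"
    and "0 < B" and "0 < s" and "0 < t"
    and second_moment: "measure_pmf.expectation p (\<lambda>x. (f x)\<^sup>2) \<le> s"
  shows "measure_pmf.prob (replicate_pmf n p) {D. measure_pmf.expectation p f + t \<le> query_val f D}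
          \<le> exp (- real n * t\<^sup>2 / (2 * (s + B * t / 3)))"
proof -
  define d where "d = s + B * t / 3"
  define l where "l = t / d"
  have "0 < d"
    using \<open>0 < B\<close> \<open>0 < s\<close> \<open>0 < t\<close> by (simp add: d_def add_pos_pos)
  then have "0 < l" and "0 \<le> l * B"
    using \<open>0 < t\<close> \<open>0 < B\<close> by (simp_all add: l_def)
  have scaled: "1 - l * B / 3 = s / d"
    using \<open>0 < d\<close> by (simp add: l_def d_def field_simps)
  moreover have "0 < s / d"
    using \<open>0 < s\<close> \<open>0 < d\<close> by simp
  ultimately have "l * B < 3"
    by linarith
  have "measure_pmf.prob (replicate_pmf n p) {D. measure_pmf.expectation p f + t \<le> query_val f D}
      \<le> exp (real n * (l\<^sup>2 * s / (2 * (1 - l * B / 3)) - l * t))"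
    using \<open>0 < l\<close> \<open>0 \<le> l * B\<close> \<open>l * B < 3\<close>
      expectation_exp_le_bernstein[OF fin bound _ _ _ second_moment]
    by (intro prob_query_val_ge_of_mgf_le[OF fin]) auto
  also have "l\<^sup>2 * s / (2 * (1 - l * B / 3)) - l * t = - t\<^sup>2 / (2 * d)"
    unfolding scaled using \<open>0 < s\<close> \<open>0 < d\<close> by (simp add: l_def field_simps power2_eq_square)
  finally show ?thesis
    by (simp add: d_def)
qed

lemma query_val_uminus: "query_val (\<lambda>x. - f x) D = - query_val f D"
proof -
  have "sum_list (map (\<lambda>x. - f x) D) = - sum_list (map f D)"
    by (induction D) simp_all
  then show ?thesis
    by (simp add: query_val_def)
qed

lemma prob_abs_query_val_dev_le:
  "measure_pmf.prob M {D. t < \<bar>query_val f D - c\<bar>}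
    \<le> measure_pmf.prob M {D. c + t \<le> query_val f D}
      + measure_pmf.prob M {D. - c + t \<le> query_val (\<lambda>x. - f x) D}"
proof -
  have "{D. t < \<bar>query_val f D - c\<bar>}
      \<subseteq> {D. c + t \<le> query_val f D} \<union> {D. - c + t \<le> query_val (\<lambda>x. - f x) D}"
    by (auto simp: query_val_uminus)
  then have "measure_pmf.prob M {D. t < \<bar>query_val f D - c\<bar>}
      \<le> measure_pmf.prob M ({D. c + t \<le> query_val f D} \<union> {D. - c + t \<le> query_val (\<lambda>x. - f x) D})"
    by (rule measure_pmf.finite_measure_mono) simp
  also have "\<dots> \<le> measure_pmf.prob M {D. c + t \<le> query_val f D}
      + measure_pmf.prob M {D. - c + t \<le> query_val (\<lambda>x. - f x) D}"
    by (rule measure_Un_le) simp_all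
  finally show ?thesis .
qed

lemma prob_abs_query_val_dev_hoeffding:
  fixes f :: "'a \<Rightarrow> real"
  assumes fin: "finite (set_pmf p)" and range: "\<forall>x. a \<le> f x \<and> f x \<le> b"
    and "a < b" and "0 < t"
  shows "measure_pmf.prob (replicate_pmf n p)
           {D. t < \<bar>query_val f D - measure_pmf.expectation p f\<bar>}
          \<le> 2 * exp (- 2 * real n * t\<^sup>2 / (b - a)\<^sup>2)"
proof -
  have "\<forall>x. - b \<le> - f x \<and> - f x \<le> - a"
    using range by auto
  from prob_query_val_ge_hoeffding[OF fin this _ \<open>0 < t\<close>, of n]
    prob_query_val_ge_hoeffding[OF fin range \<open>a < b\<close> \<open>0 < t\<close>, of n]
    prob_abs_query_val_dev_le[of "replicate_pmf n p" t f "measure_pmf.expectation p f"]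
  show ?thesis
    using \<open>a < b\<close> by (simp add: power2_commute)
qed

lemma prob_abs_query_val_dev_bernstein:
  fixes f :: "'a \<Rightarrow> real"
  assumes fin: "finite (set_pmf p)" and bound: "\<forall>x. \<bar>f x\<bar> \<le> B"
    and "0 < B" and "0 < s" and "0 < t"
    and second_moment: "measure_pmf.expectation p (\<lambda>x. (f x)\<^sup>2) \<le> s"
  shows "measure_pmf.prob (replicate_pmf n p)
           {D. t < \<bar>query_val f D - measure_pmf.expectation p f\<bar>}
          \<le> 2 * exp (- real n * t\<^sup>2 / (2 * (s + B * t / 3)))"
proof -
  have "\<forall>x. f x \<le> B" and "\<forall>x. - f x \<le> B"
    using bound by (auto simp: abs_le_iff)
  from prob_query_val_ge_bernstein[OF fin this(1) \<open>0 < B\<close> \<open>0 < s\<close> \<open>0 < t\<close> second_moment, of n]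
    prob_query_val_ge_bernstein[OF fin this(2) \<open>0 < B\<close> \<open>0 < s\<close> \<open>0 < t\<close>, of n]
    prob_abs_query_val_dev_le[of "replicate_pmf n p" t f "measure_pmf.expectation p f"]
  show ?thesis
    using second_moment by simp
qed

lemma prob_all_ge_union_bound:
  assumes "finite I" and "\<forall>i\<in>I. measure_pmf.prob M {x. \<not> P i x} \<le> b"
  shows "1 - real (card I) * b \<le> measure_pmf.prob M {x. \<forall>i\<in>I. P i x}"
proof -
  have "measure_pmf.prob M (UNIV - {x. \<forall>i\<in>I. P i x}) = measure_pmf.prob M (\<Union>i\<in>I. {x. \<not> P i x})"
    by (intro arg_cong[where f = "measure_pmf.prob M"]) auto
  also have "\<dots> \<le> (\<Sum>i\<in>I. measure_pmf.prob M {x. \<not> P i x})"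
    by (rule measure_pmf.finite_measure_subadditive_finite[OF \<open>finite I\<close>]) simp
  also have "\<dots> \<le> real (card I) * b"
    using sum_mono[of I _ "\<lambda>_. b"] assms(2) by simp
  finally show ?thesis
    using measure_pmf.prob_compl[of "{x. \<forall>i\<in>I. P i x}" M] by simp
qed

lemma prob_pair_pmf_ge_of_marginals:
  assumes "1 - a \<le> measure_pmf.prob p A" and "1 - b \<le> measure_pmf.prob q B"
    and "\<And>x y. x \<in> A \<inter> set_pmf p \<Longrightarrow> y \<in> B \<inter> set_pmf q \<Longrightarrow> (x, y) \<in> C"
  shows "1 - (a + b) \<le> measure_pmf.prob (pair_pmf p q) C"
proof (cases "a \<le> 1 \<and> b \<le> 1")
  case True
  have "0 \<le> a" and "0 \<le> b"
    using assms(1,2) measure_pmf.prob_le_1[of p A] measure_pmf.prob_le_1[of q B] by linarith+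
  then have "1 - (a + b) \<le> (1 - a) * (1 - b)"
    by (simp add: algebra_simps)
  also have "\<dots> \<le> measure_pmf.prob p (A \<inter> set_pmf p) * measure_pmf.prob q (B \<inter> set_pmf q)"
    using assms(1,2) True by (intro mult_mono) (simp_all add: measure_Int_set_pmf)
  also have "\<dots> = measure_pmf.prob (pair_pmf p q) ((A \<inter> set_pmf p) \<times> (B \<inter> set_pmf q))"
    by (rule measure_pmf_prob_product[symmetric]) (auto intro: countable_subset[OF _ countable_set_pmf])
  also have "\<dots> \<le> measure_pmf.prob (pair_pmf p q) C"
    using assms(3) by (intro measure_pmf.finite_measure_mono) auto
  finally show ?thesis .
next
  case False
  then show ?thesis
    using measure_nonneg[of "pair_pmf p q" C] assms(1,2) measure_pmf.prob_le_1[of p A]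
      measure_pmf.prob_le_1[of q B] by linarith
qed

section \<open>Importance weights\<close>

(* Since x / 0 = 0, the ratio vanishes outside the support of nu. *)
definition density_ratio :: "'a pmf \<Rightarrow> 'a pmf \<Rightarrow> 'a \<Rightarrow> real" where
  "density_ratio \<mu> \<nu> x = pmf \<mu> x / pmf \<nu> x"

lemma renyi_inf_less_infinity_imp_pmf_pos:
  assumes "renyi_inf \<mu> \<nu> < \<infinity>" and "0 < pmf \<mu> x"
  shows "0 < pmf \<nu> x"
  using assms by (auto simp: renyi_inf_def split: if_splits)

lemma set_pmf_subset_of_renyi_inf_less_infinity:
  assumes "renyi_inf \<mu> \<nu> < \<infinity>"
  shows "set_pmf \<mu> \<subseteq> set_pmf \<nu>"
  using renyi_inf_less_infinity_imp_pmf_pos[OF assms] by (auto simp: set_pmf_eq')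

lemma density_ratio_le_exp_renyi_inf:
  fixes \<mu> \<nu> :: "'a::finite pmf"
  assumes "renyi_inf \<mu> \<nu> < \<infinity>"
  shows "density_ratio \<mu> \<nu> x \<le> exp (real_of_ereal (renyi_inf \<mu> \<nu>))"
proof -
  define ratios where "ratios = {pmf \<mu> x / pmf \<nu> x | x. 0 < pmf \<mu> x}"
  have "finite ratios"
    by (simp add: ratios_def)
  have le_Max: "density_ratio \<mu> \<nu> y \<le> Max ratios" if "0 < pmf \<mu> y" for y
    unfolding density_ratio_def using \<open>finite ratios\<close> that by (intro Max_ge) (auto simp: ratios_def)
  obtain x0 where "x0 \<in> set_pmf \<mu>"
    using set_pmf_not_empty by fast
  then have "0 < pmf \<mu> x0" and "0 < pmf \<nu> x0"
    using renyi_inf_less_infinity_imp_pmf_pos[OF assms] by (auto simp: pmf_positive)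
  then have "0 < Max ratios"
    using le_Max[of x0] by (smt (verit) density_ratio_def divide_pos_pos)
  have "renyi_inf \<mu> \<nu> = ereal (ln (Max ratios))"
    using renyi_inf_less_infinity_imp_pmf_pos[OF assms] by (auto simp: renyi_inf_def ratios_def)
  then have exp_eq: "exp (real_of_ereal (renyi_inf \<mu> \<nu>)) = Max ratios"
    using \<open>0 < Max ratios\<close> by simp
  show ?thesis
  proof (cases "0 < pmf \<mu> x")
    case True
    then show ?thesis
      using le_Max exp_eq by simp
  next
    case False
    then have "pmf \<mu> x = 0"
      using pmf_nonneg[of \<mu> x] by linarith
    then show ?thesis
      using \<open>0 < Max ratios\<close> exp_eq by (simp add: density_ratio_def)
  qed
qed

lemma expectation_density_ratio_mult:
  fixes g :: "'a \<Rightarrow> real"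
  assumes fin: "finite (set_pmf \<nu>)" and supp: "set_pmf \<mu> \<subseteq> set_pmf \<nu>"
  shows "measure_pmf.expectation \<nu> (\<lambda>x. density_ratio \<mu> \<nu> x * g x) = measure_pmf.expectation \<mu> g"
proof -
  have "measure_pmf.expectation \<nu> (\<lambda>x. density_ratio \<mu> \<nu> x * g x)
      = (\<Sum>x\<in>set_pmf \<nu>. density_ratio \<mu> \<nu> x * g x * pmf \<nu> x)"
    by (rule integral_measure_pmf_real) (auto intro: fin)
  also have "\<dots> = (\<Sum>x\<in>set_pmf \<nu>. g x * pmf \<mu> x)"
    by (intro sum.cong) (auto simp: density_ratio_def set_pmf_eq)
  also have "\<dots> = measure_pmf.expectation \<mu> g"
    using supp by (intro integral_measure_pmf_real[symmetric] fin) auto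
  finally show ?thesis .
qed

lemma expectation_density_ratio_sq:
  fixes \<mu> \<nu> :: "'a::finite pmf"
  assumes supp: "set_pmf \<mu> \<subseteq> set_pmf \<nu>"
  shows "measure_pmf.expectation \<nu> (\<lambda>x. (density_ratio \<mu> \<nu> x)\<^sup>2) = exp (renyi2 \<mu> \<nu>)"
proof -
  have "measure_pmf.expectation \<nu> (\<lambda>x. (density_ratio \<mu> \<nu> x)\<^sup>2)
      = (\<Sum>x\<in>UNIV. (density_ratio \<mu> \<nu> x)\<^sup>2 * pmf \<nu> x)"
    by (rule integral_measure_pmf_real) auto
  also have "\<dots> = (\<Sum>x\<in>UNIV. pmf \<mu> x ^ 2 / pmf \<nu> x)"
    by (intro sum.cong) (auto simp: density_ratio_def power2_eq_square)
  finally have sum_eq: "measure_pmf.expectation \<nu> (\<lambda>x. (density_ratio \<mu> \<nu> x)\<^sup>2)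
      = (\<Sum>x\<in>UNIV. pmf \<mu> x ^ 2 / pmf \<nu> x)" .
  obtain x0 where "x0 \<in> set_pmf \<mu>"
    using set_pmf_not_empty by fast
  then have "0 < pmf \<mu> x0" and "0 < pmf \<nu> x0"
    using supp by (auto simp: pmf_positive)
  then have "0 < pmf \<mu> x0 ^ 2 / pmf \<nu> x0"
    by simp
  also have "\<dots> \<le> (\<Sum>x\<in>UNIV. pmf \<mu> x ^ 2 / pmf \<nu> x)"
    by (rule member_le_sum) auto
  finally show ?thesis
    by (simp add: sum_eq renyi2_def)
qed

section \<open>Mixtures supported on a sample\<close>

definition reweighted_pmf :: "('a \<Rightarrow> real) \<Rightarrow> 'a list \<Rightarrow> 'a pmf" where
  "reweighted_pmf R D = pmf_of_list (map (\<lambda>x. (x, R x / sum_list (map R D))) D)"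

lemma sum_pmf_of_list:
  assumes "pmf_of_list_wf xs" and "finite S" and "fst ` set xs \<subseteq> S"
  shows "(\<Sum>x\<in>S. pmf (pmf_of_list xs) x * g x) = (\<Sum>z\<leftarrow>xs. snd z * g (fst z))"
proof -
  have "(\<Sum>x\<in>S. sum_list (map snd (filter (\<lambda>z. fst z = x) ys)) * g x) = (\<Sum>z\<leftarrow>ys. snd z * g (fst z))"
    if "fst ` set ys \<subseteq> S" for ys
    using that
  proof (induction ys)
    case (Cons z ys)
    have "(\<Sum>x\<in>S. sum_list (map snd (filter (\<lambda>z'. fst z' = x) (z # ys))) * g x)
        = (\<Sum>x\<in>S. if fst z = x then snd z * g x else 0)
          + (\<Sum>x\<in>S. sum_list (map snd (filter (\<lambda>z'. fst z' = x) ys)) * g x)"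
      by (simp add: sum.distrib[symmetric]) (intro sum.cong; simp add: distrib_right)
    then show ?case
      using Cons \<open>finite S\<close> by (simp add: sum.delta)
  qed simp
  then show ?thesis
    using assms by (simp add: pmf_pmf_of_list)
qed

lemma sum_list_map_divide: "(\<Sum>x\<leftarrow>D. f x / c) = (\<Sum>x\<leftarrow>D. f x) / (c::real)"
  by (induction D) (simp_all add: add_divide_distrib)

lemma
  assumes "\<forall>x. 0 \<le> R x" and "0 < sum_list (map R D)"
  shows set_pmf_reweighted_pmf: "set_pmf (reweighted_pmf R D) \<subseteq> set D"
    and sum_reweighted_pmf: "(\<Sum>x\<in>set D. pmf (reweighted_pmf R D) x * g x)
                               = sum_list (map (\<lambda>x. R x * g x) D) / sum_list (map R D)"
proof -
  let ?xs = "map (\<lambda>x. (x, R x / sum_list (map R D))) D"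
  have "pmf_of_list_wf ?xs"
    using assms by (intro pmf_of_list_wfI) (auto simp: o_def sum_list_map_divide)
  then show "set_pmf (reweighted_pmf R D) \<subseteq> set D"
    unfolding reweighted_pmf_def using set_pmf_of_list by fastforce
  show "(\<Sum>x\<in>set D. pmf (reweighted_pmf R D) x * g x)
      = sum_list (map (\<lambda>x. R x * g x) D) / sum_list (map R D)"
    unfolding reweighted_pmf_def
    by (subst sum_pmf_of_list[OF \<open>pmf_of_list_wf ?xs\<close>])
       (auto simp: o_def sum_list_map_divide[symmetric])
qed

lemma query_val_nonneg_le_1:
  assumes "\<forall>x. 0 \<le> q x \<and> q x \<le> 1"
  shows "0 \<le> query_val q D \<and> query_val q D \<le> 1"
proof -
  have "0 \<le> sum_list (map q D)"
    using assms by (intro sum_list_nonneg) auto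
  moreover have "sum_list (map q D) \<le> sum_list (map (\<lambda>_. 1) D)"
    using assms by (intro sum_list_mono) auto
  ultimately show ?thesis
    by (cases "D = []") (auto simp: query_val_def sum_list_triv divide_le_eq)
qed

lemma mix_err_le:
  assumes "set_pmf w \<subseteq> S" and "finite Q" and "0 \<le> a"
    and "\<forall>q\<in>Q. \<bar>query_val q D - (\<Sum>x\<in>S. pmf w x * q x)\<bar> \<le> a"
  shows "mix_err D Q S \<le> a"
proof -
  define err where "err w = Max (insert 0 ((\<lambda>q. \<bar>query_val q D - (\<Sum>x\<in>S. pmf w x * q x)\<bar>) ` Q))" for w
  have "bdd_below {err w | w. set_pmf w \<subseteq> S}"
    using \<open>finite Q\<close> by (intro bdd_belowI[of _ 0]) (auto simp: err_def)
  moreover have "err w \<le> a"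
    using assms by (simp add: err_def)
  ultimately show ?thesis
    unfolding mix_err_def err_def[symmetric] using assms(1) by (intro cInf_lower2) auto
qed

lemma mix_err_le_1:
  assumes "finite Q" and "\<forall>q\<in>Q. \<forall>x. 0 \<le> q x \<and> q x \<le> 1" and "finite S" and "y \<in> S"
  shows "mix_err D Q S \<le> 1"
proof (rule mix_err_le[of "return_pmf y"])
  have "(\<Sum>x\<in>S. pmf (return_pmf y) x * q x) = q y" for q
    using assms(3,4) by (simp add: pmf_return indicator_def if_distrib sum.delta cong: if_cong)
  then show "\<forall>q\<in>Q. \<bar>query_val q D - (\<Sum>x\<in>S. pmf (return_pmf y) x * q x)\<bar> \<le> 1"
    using assms(2) query_val_nonneg_le_1 by (smt (verit))
qed (use assms in auto)

lemma mix_err_le_reweighted: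
  assumes "finite Q" and queries: "\<forall>q\<in>Q. \<forall>x. 0 \<le> q x \<and> q x \<le> 1"
    and "\<forall>x. 0 \<le> R x" and "D \<noteq> []" and "0 \<le> a"
    and total_weight: "\<bar>query_val R D - 1\<bar> \<le> b"
    and sample: "\<forall>q\<in>Q. \<bar>query_val q D' - c q\<bar> \<le> a"
    and reweighted: "\<forall>q\<in>Q. \<bar>query_val (\<lambda>x. R x * q x) D - c q\<bar> \<le> b"
  shows "mix_err D' Q (set D) \<le> a + 2 * b"
proof (cases "0 < sum_list (map R D)")
  case False
  then have "query_val R D = 0"
    using \<open>\<forall>x. 0 \<le> R x\<close> sum_list_nonneg[of "map R D"] by (auto simp: query_val_def)
  then have "1 \<le> b"
    using total_weight by simp
  moreover have "mix_err D' Q (set D) \<le> 1"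
    using \<open>D \<noteq> []\<close> by (intro mix_err_le_1[OF \<open>finite Q\<close> queries _ hd_in_set]) auto
  ultimately show ?thesis
    using \<open>0 \<le> a\<close> by linarith
next
  case True
  show ?thesis
  proof (rule mix_err_le[OF set_pmf_reweighted_pmf[OF \<open>\<forall>x. 0 \<le> R x\<close> True] \<open>finite Q\<close>])
    show "\<forall>q\<in>Q. \<bar>query_val q D' - (\<Sum>x\<in>set D. pmf (reweighted_pmf R D) x * q x)\<bar> \<le> a + 2 * b"
    proof
      fix q assume "q \<in> Q"
      define A where "A = query_val (\<lambda>x. R x * q x) D"
      define W where "W = query_val R D"
      have "0 < W"
        using True \<open>D \<noteq> []\<close> by (simp add: W_def query_val_def)
      have mixture_answer: "(\<Sum>x\<in>set D. pmf (reweighted_pmf R D) x * q x) = A / W"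
        using \<open>D \<noteq> []\<close> by (simp add: sum_reweighted_pmf[OF \<open>\<forall>x. 0 \<le> R x\<close> True] A_def W_def query_val_def)
      have "0 \<le> A"
        unfolding A_def query_val_def using queries \<open>q \<in> Q\<close> \<open>\<forall>x. 0 \<le> R x\<close>
        by (intro divide_nonneg_nonneg sum_list_nonneg) auto
      have "A \<le> W"
        unfolding A_def W_def query_val_def using queries \<open>q \<in> Q\<close> \<open>\<forall>x. 0 \<le> R x\<close>
        by (intro divide_right_mono sum_list_mono) (auto simp: mult_left_le)
      have "A - A / W = A / W * (W - 1)"
        using \<open>0 < W\<close> by (simp add: field_simps)
      then have "\<bar>A - A / W\<bar> = A / W * \<bar>W - 1\<bar>"
        using \<open>0 < W\<close> \<open>0 \<le> A\<close> by (simp add: abs_mult)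
      also have "\<dots> \<le> 1 * b"
        using \<open>0 < W\<close> \<open>0 \<le> A\<close> \<open>A \<le> W\<close> total_weight
        by (intro mult_mono) (auto simp: W_def)
      finally have "\<bar>A - A / W\<bar> \<le> b"
        by simp
      then show "\<bar>query_val q D' - (\<Sum>x\<in>set D. pmf (reweighted_pmf R D) x * q x)\<bar> \<le> a + 2 * b"
        using mixture_answer sample reweighted \<open>q \<in> Q\<close> by (fastforce simp: A_def)
    qed
  qed (use assms in auto)
qed

section \<open>Sample complexity\<close>

lemma prob_sample_answers_queries:
  fixes p :: "'a pmf" and Q :: "('a \<Rightarrow> real) set"
  assumes fin: "finite (set_pmf p)" and "finite Q"
    and queries: "\<forall>q\<in>Q. \<forall>x. 0 \<le> q x \<and> q x \<le> 1" and "0 < t"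
  shows "1 - real (card Q) * (2 * exp (- 2 * real n * t\<^sup>2))
          \<le> measure_pmf.prob (replicate_pmf n p)
               {D. \<forall>q\<in>Q. \<bar>query_val q D - measure_pmf.expectation p q\<bar> \<le> t}"
proof (rule prob_all_ge_union_bound[OF \<open>finite Q\<close>], intro ballI)
  fix q assume "q \<in> Q"
  then have "\<forall>x. 0 \<le> q x \<and> q x \<le> 1"
    using queries by blast
  from prob_abs_query_val_dev_hoeffding[OF fin this zero_less_one \<open>0 < t\<close>, of n]
  show "measure_pmf.prob (replicate_pmf n p)
      {D. \<not> \<bar>query_val q D - measure_pmf.expectation p q\<bar> \<le> t} \<le> 2 * exp (- 2 * real n * t\<^sup>2)"
    by (simp add: not_le)
qed

lemma prob_reweighted_sample_answers_queries:
  fixes \<mu> \<nu> :: "'a::finite pmf" and Q :: "('a \<Rightarrow> real) set"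
  assumes "renyi_inf \<mu> \<nu> < \<infinity>" and "finite Q"
    and queries: "\<forall>q\<in>Q. \<forall>x. 0 \<le> q x \<and> q x \<le> 1" and "0 < t"
  defines "S \<equiv> exp (renyi2 \<mu> \<nu>)" and "M \<equiv> exp (real_of_ereal (renyi_inf \<mu> \<nu>))"
  shows "1 - real (card Q) * (2 * exp (- real m * t\<^sup>2 / (2 * (S + M * t / 3))))
          \<le> measure_pmf.prob (replicate_pmf m \<nu>)
               {D. \<forall>q\<in>Q. \<bar>query_val (\<lambda>x. density_ratio \<mu> \<nu> x * q x) D
                           - measure_pmf.expectation \<mu> q\<bar> \<le> t}"
proof (rule prob_all_ge_union_bound[OF \<open>finite Q\<close>], intro ballI)
  fix q assume "q \<in> Q"
  let ?f = "\<lambda>x. density_ratio \<mu> \<nu> x * q x"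
  have supp: "set_pmf \<mu> \<subseteq> set_pmf \<nu>"
    by (rule set_pmf_subset_of_renyi_inf_less_infinity[OF assms(1)])
  have ratio_nonneg: "0 \<le> density_ratio \<mu> \<nu> x" for x
    by (simp add: density_ratio_def)
  have "\<bar>?f x\<bar> \<le> M" for x
  proof -
    have "\<bar>?f x\<bar> \<le> density_ratio \<mu> \<nu> x"
      using queries \<open>q \<in> Q\<close> ratio_nonneg by (simp add: abs_mult mult_left_le)
    also have "\<dots> \<le> M"
      unfolding M_def by (rule density_ratio_le_exp_renyi_inf[OF assms(1)])
    finally show ?thesis .
  qed
  moreover have "measure_pmf.expectation \<nu> (\<lambda>x. (?f x)\<^sup>2) \<le> S"
  proof -
    have "measure_pmf.expectation \<nu> (\<lambda>x. (?f x)\<^sup>2)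
        \<le> measure_pmf.expectation \<nu> (\<lambda>x. (density_ratio \<mu> \<nu> x)\<^sup>2)"
      using queries \<open>q \<in> Q\<close> ratio_nonneg
      by (intro integral_mono integrable_measure_pmf_finite)
         (auto simp: power_mult_distrib mult_left_le power_le_one)
    then show ?thesis
      unfolding S_def expectation_density_ratio_sq[OF supp] .
  qed
  ultimately have "measure_pmf.prob (replicate_pmf m \<nu>)
      {D. t < \<bar>query_val ?f D - measure_pmf.expectation \<nu> ?f\<bar>}
      \<le> 2 * exp (- real m * t\<^sup>2 / (2 * (S + M * t / 3)))"
    using \<open>0 < t\<close> by (intro prob_abs_query_val_dev_bernstein) (auto simp: S_def M_def)
  then show "measure_pmf.prob (replicate_pmf m \<nu>)
      {D. \<not> \<bar>query_val ?f D - measure_pmf.expectation \<mu> q\<bar> \<le> t}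
      \<le> 2 * exp (- real m * t\<^sup>2 / (2 * (S + M * t / 3)))"
    by (simp add: not_le expectation_density_ratio_mult[OF _ supp])
qed

lemma mult_exp_neg_le_of_ln_le:
  fixes k \<delta> x :: real
  assumes "0 < k" and "0 < \<delta>" and "ln (k / \<delta>) \<le> x"
  shows "k * exp (- x) \<le> \<delta>"
proof -
  have "exp (- x) \<le> exp (- ln (k / \<delta>))"
    using assms(3) by simp
  also have "\<dots> = \<delta> / k"
    using assms(1,2) by (simp add: exp_minus)
  finally show ?thesis
    using assms(1) by (simp add: field_simps)
qed

lemma prob_sample_answers_queries_of_sample_size:
  fixes p :: "'a pmf" and Q :: "('a \<Rightarrow> real) set"
  assumes "finite (set_pmf p)" and "finite Q" and "\<forall>q\<in>Q. \<forall>x. 0 \<le> q x \<and> q x \<le> 1"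
    and "0 < \<alpha>" and "0 < \<beta>" and n: "8 / \<alpha>\<^sup>2 * ln (4 * real (card Q) / \<beta>) \<le> real n"
  shows "1 - \<beta> / 2 \<le> measure_pmf.prob (replicate_pmf n p)
                         {D. \<forall>q\<in>Q. \<bar>query_val q D - measure_pmf.expectation p q\<bar> \<le> \<alpha> / 2}"
proof -
  define tail where "tail = 2 * exp (- 2 * real n * (\<alpha> / 2)\<^sup>2)"
  have "real (card Q) * tail \<le> \<beta> / 2"
  proof (cases "card Q = 0")
    case False
    have "ln (4 * real (card Q) / \<beta>) \<le> real n * \<alpha>\<^sup>2 / 8"
      using n \<open>0 < \<alpha>\<close> by (simp add: field_simps)
    also have "\<dots> \<le> 2 * real n * (\<alpha> / 2)\<^sup>2"
      by (simp add: power_divide)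
    finally have "ln (2 * real (card Q) / (\<beta> / 2)) \<le> 2 * real n * (\<alpha> / 2)\<^sup>2"
      by (simp add: field_simps)
    then have "2 * real (card Q) * exp (- (2 * real n * (\<alpha> / 2)\<^sup>2)) \<le> \<beta> / 2"
      using False \<open>0 < \<beta>\<close> by (intro mult_exp_neg_le_of_ln_le) auto
    then show ?thesis
      by (simp add: tail_def)
  qed (use \<open>0 < \<beta>\<close> in simp)
  moreover have "1 - real (card Q) * tail \<le> measure_pmf.prob (replicate_pmf n p)
                     {D. \<forall>q\<in>Q. \<bar>query_val q D - measure_pmf.expectation p q\<bar> \<le> \<alpha> / 2}"
    unfolding tail_def using assms by (intro prob_sample_answers_queries) auto
  ultimately show ?thesis
    by linarith
qed

lemma prob_reweighted_sample_answers_queries_of_sample_size: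
  fixes \<mu> \<nu> :: "'a::finite pmf" and Q :: "('a \<Rightarrow> real) set"
  assumes "renyi_inf \<mu> \<nu> < \<infinity>" and "finite Q" and "\<forall>q\<in>Q. \<forall>x. 0 \<le> q x \<and> q x \<le> 1"
    and "0 < \<alpha>" and "0 < \<beta>"
  defines "S \<equiv> exp (renyi2 \<mu> \<nu>)" and "M \<equiv> exp (real_of_ereal (renyi_inf \<mu> \<nu>))"
  assumes m: "(32 / \<alpha>\<^sup>2 * S + 8 / (3 * \<alpha>) * M) * ln ((4 * real (card Q) + 4) / \<beta>) \<le> real m"
  shows "1 - \<beta> / 2 \<le> measure_pmf.prob (replicate_pmf m \<nu>)
                         {D. \<forall>q\<in>insert (\<lambda>_. 1) Q. \<bar>query_val (\<lambda>x. density_ratio \<mu> \<nu> x * q x) D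
                                                     - measure_pmf.expectation \<mu> q\<bar> \<le> \<alpha> / 4}"
proof -
  define C where "C = 32 / \<alpha>\<^sup>2 * S + 8 / (3 * \<alpha>) * M"
  define tail where "tail = 2 * exp (- real m * (\<alpha> / 4)\<^sup>2 / (2 * (S + M * (\<alpha> / 4) / 3)))"
  have "0 < C"
    using \<open>0 < \<alpha>\<close> by (simp add: C_def S_def M_def add_pos_pos)
  have "2 * (real (card Q) + 1) / (\<beta> / 2) = (4 * real (card Q) + 4) / \<beta>"
    by (simp add: field_simps)
  moreover have "ln ((4 * real (card Q) + 4) / \<beta>) \<le> real m / C"
    using m[folded C_def] \<open>0 < C\<close> by (simp add: le_divide_eq mult.commute)
  ultimately have "2 * (real (card Q) + 1) * exp (- (real m / C)) \<le> \<beta> / 2"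
    using \<open>0 < \<beta>\<close> by (intro mult_exp_neg_le_of_ln_le) auto
  moreover have "tail = 2 * exp (- (real m / C))"
    using \<open>0 < \<alpha>\<close> by (simp add: tail_def C_def field_simps power2_eq_square)
  ultimately have "(real (card Q) + 1) * tail \<le> \<beta> / 2"
    by (simp add: algebra_simps)
  moreover have "real (card (insert (\<lambda>_. 1) Q)) * tail \<le> (real (card Q) + 1) * tail"
    using \<open>finite Q\<close> by (intro mult_right_mono) (auto simp: tail_def card_insert_if)
  moreover have "1 - real (card (insert (\<lambda>_. 1) Q)) * tail \<le> measure_pmf.prob (replicate_pmf m \<nu>)
                     {D. \<forall>q\<in>insert (\<lambda>_. 1) Q. \<bar>query_val (\<lambda>x. density_ratio \<mu> \<nu> x * q x) D
                                                - measure_pmf.expectation \<mu> q\<bar> \<le> \<alpha> / 4}"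
    unfolding tail_def S_def M_def using assms(2-4)
    by (intro prob_reweighted_sample_answers_queries[OF assms(1)]) auto
  ultimately show ?thesis
    by linarith
qed

theorem mainTheorem2:
  fixes \<mu> \<nu> :: "'a::finite pmf" and n m :: nat and Q :: "('a \<Rightarrow> real) set"
    and \<alpha> \<beta> :: real
  assumes "renyi_inf \<mu> \<nu> < \<infinity>"
    and "finite Q" and "\<forall>q\<in>Q. \<forall>x. 0 \<le> q x \<and> q x \<le> 1"
    and "\<alpha> > 0" and "\<beta> > 0"
    and "real n \<ge> 8 / \<alpha>^2 * ln (4 * real (card Q) / \<beta>)"
    and "real m \<ge> (32 / \<alpha>^2 * exp (renyi2 \<mu> \<nu>)
                    + 8 / (3 * \<alpha>) * exp (real_of_ereal (renyi_inf \<mu> \<nu>)))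
                   * ln ((4 * real (card Q) + 4) / \<beta>)"
  shows "measure_pmf.prob (pair_pmf (replicate_pmf n \<mu>) (replicate_pmf m \<nu>))
           {(Dt, Dh). mix_err Dt Q (set Dh) \<le> \<alpha>} \<ge> 1 - \<beta>"
proof (cases "\<beta> < 1")
  case False
  have "0 \<le> measure_pmf.prob (pair_pmf (replicate_pmf n \<mu>) (replicate_pmf m \<nu>))
              {(Dt, Dh). mix_err Dt Q (set Dh) \<le> \<alpha>}"
    by (rule measure_nonneg)
  with False show ?thesis
    by linarith
next
  case True
  define G1 where "G1 = {Dt. \<forall>q\<in>Q. \<bar>query_val q Dt - measure_pmf.expectation \<mu> q\<bar> \<le> \<alpha> / 2}"
  define G2 where "G2 = {Dh. \<forall>q\<in>insert (\<lambda>_. 1) Q.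
    \<bar>query_val (\<lambda>x. density_ratio \<mu> \<nu> x * q x) Dh - measure_pmf.expectation \<mu> q\<bar> \<le> \<alpha> / 4}"
  have P1: "1 - \<beta> / 2 \<le> measure_pmf.prob (replicate_pmf n \<mu>) G1"
    unfolding G1_def using assms(2-6) by (intro prob_sample_answers_queries_of_sample_size) auto
  have P2: "1 - \<beta> / 2 \<le> measure_pmf.prob (replicate_pmf m \<nu>) G2"
    unfolding G2_def using assms by (intro prob_reweighted_sample_answers_queries_of_sample_size) auto
  have "0 < (32 / \<alpha>\<^sup>2 * exp (renyi2 \<mu> \<nu>) + 8 / (3 * \<alpha>) * exp (real_of_ereal (renyi_inf \<mu> \<nu>)))
            * ln ((4 * real (card Q) + 4) / \<beta>)"
    using True assms(4,5) by (intro mult_pos_pos add_pos_pos ln_gt_zero) (simp_all add: less_divide_eq)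
  then have "0 < m"
    using assms(7) by simp
  have "mix_err Dt Q (set Dh) \<le> \<alpha>" if "Dt \<in> G1" and "Dh \<in> G2" and "Dh \<noteq> []" for Dt Dh
  proof -
    have "\<bar>query_val (density_ratio \<mu> \<nu>) Dh - 1\<bar> \<le> \<alpha> / 4"
      and "\<forall>q\<in>Q. \<bar>query_val (\<lambda>x. density_ratio \<mu> \<nu> x * q x) Dh - measure_pmf.expectation \<mu> q\<bar> \<le> \<alpha> / 4"
      and "\<forall>q\<in>Q. \<bar>query_val q Dt - measure_pmf.expectation \<mu> q\<bar> \<le> \<alpha> / 2"
      using that(1,2) by (simp_all add: G1_def G2_def)
    then have "mix_err Dt Q (set Dh) \<le> \<alpha> / 2 + 2 * (\<alpha> / 4)"
      using assms(4) \<open>Dh \<noteq> []\<close>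
      by (intro mix_err_le_reweighted[OF assms(2,3)]) (auto simp: density_ratio_def)
    then show ?thesis
      by simp
  qed
  with \<open>0 < m\<close> have "1 - (\<beta> / 2 + \<beta> / 2) \<le> measure_pmf.prob (pair_pmf (replicate_pmf n \<mu>) (replicate_pmf m \<nu>))
                              {(Dt, Dh). mix_err Dt Q (set Dh) \<le> \<alpha>}"
    by (intro prob_pair_pmf_ge_of_marginals[OF P1 P2]) (auto simp: set_replicate_pmf)
  then show ?thesis
    by simp
qed

end
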